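(* In the Mahi-Mahi protocol, if a leader slot $s$ is committed at two honest validators, then $s$ is committed with the same block at both validators.
   Context: Setting: $n=3f+1$ validators, at most $f$ Byzantine; honest validators create exactly one block per round, Byzantine ones may create several blocks per round (equivocation). Each valid block of round $r$ references (parents) at least $2f+1$ blocks of round $r-1$. A block $b$ of round $r'$ is a vote for a block $L$ of round $r<r'$ with author $a$ if the first block with author $a$ and round $r$ met in the deterministic depth-first search from $b$ along parent references is $L$. With wave length $w\in\{4,5\}$, a block of round $r+w-1$ is a certificate for a block $L$ of round $r$ if at least $2f+1$ of its parents are votes for $L$. A leader slot is a pair (validator, round) chosen via a global perfect common coin (so all validators agree on the sequence of slots); it may contain zero, one or several blocks of that validator and round. Each validator classifies slots from its local DAG: direct commit of $L$ if $2f+1$ round-$(r+w-1)$ certificates for $L$, direct skip if $2f+1$ round-$(r+w-2)$ non-votes for $L$; otherwise via the anchor (first non-skipped slot of round $>r+w-1$): if committed with $A$, commit $L$ if $A$ has a path to a certificate for $L$, else skip; otherwise undecided. Thus a committed block always has a certificate in the validator's DAG. *)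

theory Defs
  imports Main
begin

text \<open>Blocks are identified by their content (as with hashes): author, round,
  the ordered list of parent references, and an arbitrary payload (the payload lets a
  Byzantine author create several distinct blocks with the same author and round).\<close>

datatype ('v, 'p) block =
  Block (author: 'v) (rnd: nat) (parents: "('v, 'p) block list") (payload: 'p)

fun dfs :: "('v, 'p) block \<Rightarrow> ('v, 'p) block list" where
  "dfs (Block a r ps x) = Block a r ps x # concat (map dfs ps)"

definition parent_rel :: "(('v, 'p) block \<times> ('v, 'p) block) set" where
  "parent_rel = {(x, y). y \<in> set (parents x)}"

definition valid_block :: "nat \<Rightarrow> ('v, 'p) block \<Rightarrow> bool" where
  "valid_block f b \<longleftrightarrow>
     (\<forall>p \<in> set (parents b). rnd p < rnd b) \<and>
     (0 < rnd b \<longrightarrow> 2 * f + 1 \<le> card (author ` {p \<in> set (parents b). rnd p = rnd b - 1}))"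

definition is_vote :: "('v, 'p) block \<Rightarrow> ('v, 'p) block \<Rightarrow> bool" where
  "is_vote b L \<longleftrightarrow> rnd L < rnd b \<and>
     find (\<lambda>x. author x = author L \<and> rnd x = rnd L) (dfs b) = Some L"

definition is_cert :: "nat \<Rightarrow> nat \<Rightarrow> ('v, 'p) block \<Rightarrow> ('v, 'p) block \<Rightarrow> bool" where
  "is_cert f w c L \<longleftrightarrow> rnd c = rnd L + w - 1 \<and>
     2 * f + 1 \<le> card (author ` {p \<in> set (parents c). rnd p = rnd c - 1 \<and> is_vote p L})"

definition direct_commit ::
  "nat \<Rightarrow> nat \<Rightarrow> ('v, 'p) block set \<Rightarrow> 'v \<times> nat \<Rightarrow> ('v, 'p) block \<Rightarrow> bool" where
  "direct_commit f w D s L \<longleftrightarrow> L \<in> D \<and> author L = fst s \<and> rnd L = snd s \<and>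
     2 * f + 1 \<le> card (author ` {c \<in> D. is_cert f w c L})"

definition direct_skip :: "nat \<Rightarrow> nat \<Rightarrow> ('v, 'p) block set \<Rightarrow> 'v \<times> nat \<Rightarrow> bool" where
  "direct_skip f w D s \<longleftrightarrow>
     2 * f + 1 \<le> card (author ` {b \<in> D. rnd b = snd s + w - 2 \<and>
        \<not> (\<exists>L. author L = fst s \<and> rnd L = snd s \<and> is_vote b L)})"

text \<open>Decision rule of a validator with local DAG D for the slot sequence slot
  (slot i is the i-th leader slot). committed ... i L: slot i is committed with block L;
  skipped ... i: slot i is skipped; neither: undecided.\<close>

inductive committed ::
  "nat \<Rightarrow> nat \<Rightarrow> (nat \<Rightarrow> 'v \<times> nat) \<Rightarrow> ('v, 'p) block set \<Rightarrow> nat \<Rightarrow> ('v, 'p) block \<Rightarrow> bool"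
  and skipped ::
  "nat \<Rightarrow> nat \<Rightarrow> (nat \<Rightarrow> 'v \<times> nat) \<Rightarrow> ('v, 'p) block set \<Rightarrow> nat \<Rightarrow> bool"
  for f w slot D
where
  commit_direct:
    "direct_commit f w D (slot i) L \<Longrightarrow> committed f w slot D i L"
| skip_direct:
    "\<not> (\<exists>L. direct_commit f w D (slot i) L) \<Longrightarrow> direct_skip f w D (slot i) \<Longrightarrow>
     skipped f w slot D i"
| commit_indirect:
    "\<not> (\<exists>L. direct_commit f w D (slot i) L) \<Longrightarrow> \<not> direct_skip f w D (slot i) \<Longrightarrow>
     snd (slot i) + w - 1 < snd (slot j) \<Longrightarrow>
     (\<forall>k<j. snd (slot i) + w - 1 < snd (slot k) \<longrightarrow> skipped f w slot D k) \<Longrightarrow>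
     committed f w slot D j A \<Longrightarrow>
     c \<in> D \<Longrightarrow> is_cert f w c L \<Longrightarrow> author L = fst (slot i) \<Longrightarrow> rnd L = snd (slot i) \<Longrightarrow>
     (A, c) \<in> parent_rel\<^sup>* \<Longrightarrow>
     committed f w slot D i L"
| skip_indirect:
    "\<not> (\<exists>L. direct_commit f w D (slot i) L) \<Longrightarrow> \<not> direct_skip f w D (slot i) \<Longrightarrow>
     snd (slot i) + w - 1 < snd (slot j) \<Longrightarrow>
     (\<forall>k<j. snd (slot i) + w - 1 < snd (slot k) \<longrightarrow> skipped f w slot D k) \<Longrightarrow>
     committed f w slot D j A \<Longrightarrow>
     \<not> (\<exists>c L. c \<in> D \<and> is_cert f w c L \<and> author L = fst (slot i) \<and> rnd L = snd (slot i) \<and>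
            (A, c) \<in> parent_rel\<^sup>*) \<Longrightarrow>
     skipped f w slot D i"

end

theory Submission
  imports Defs
begin

text \<open>Every committed block has a certificate in the local DAG. The voters of two
  certificates for the same slot form two quorums of size 2f+1 among 3f+1 validators, so
  they share an honest validator; its unique block of round r+w-2 is a vote for both
  certified blocks, and a block votes for at most one block per slot. Hence the two
  certified blocks coincide. Neither the wave length nor the validity of the DAGs matters.\<close>

lemma committed_imp_cert:
  assumes "committed f w slot D i L"
  shows "author L = fst (slot i) \<and> rnd L = snd (slot i) \<and> (\<exists>c\<in>D. is_cert f w c L)"
  using assms
proof cases
  case commit_direct
  then have "card (author ` {c \<in> D. is_cert f w c L}) \<noteq> 0"
    by (simp add: direct_commit_def)
  then have "\<exists>c\<in>D. is_cert f w c L"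
    by (metis (no_types, lifting) card.empty empty_Collect_eq image_empty)
  with commit_direct show ?thesis
    by (simp add: direct_commit_def)
qed blast

lemma card_Int_lower_bound:
  assumes "finite V" "A \<subseteq> V" "B \<subseteq> V"
  shows "card A + card B \<le> card V + card (A \<inter> B)"
proof -
  have "finite A" "finite B"
    using assms finite_subset by auto
  then have "card A + card B = card (A \<union> B) + card (A \<inter> B)"
    by (rule card_Un_Int)
  moreover have "card (A \<union> B) \<le> card V"
    using assms by (intro card_mono) auto
  ultimately show ?thesis
    by linarith
qed

lemma quorums_share_honest:
  assumes "finite V" "card V \<le> 3 * f + 1" "Byz \<subseteq> V" "card Byz \<le> f"
    and "Q1 \<subseteq> V" "Q2 \<subseteq> V" "2 * f + 1 \<le> card Q1" "2 * f + 1 \<le> card Q2"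
  obtains v where "v \<in> Q1" "v \<in> Q2" "v \<notin> Byz"
proof -
  have "f + 1 \<le> card (Q1 \<inter> Q2)"
    using card_Int_lower_bound[OF assms(1,5,6)] assms(2,7,8) by linarith
  moreover have "card (Q1 \<inter> Q2) \<le> card Byz" if "Q1 \<inter> Q2 \<subseteq> Byz"
    using card_mono[OF finite_subset[OF assms(3,1)] that] .
  ultimately have "\<not> Q1 \<inter> Q2 \<subseteq> Byz"
    using assms(4) by linarith
  with that show ?thesis
    by blast
qed

lemma vote_unique:
  assumes "is_vote b L1" "is_vote b L2" "author L1 = author L2" "rnd L1 = rnd L2"
  shows "L1 = L2"
  using assms by (simp add: is_vote_def)

definition cert_votes :: "('v, 'p) block \<Rightarrow> ('v, 'p) block \<Rightarrow> ('v, 'p) block set" where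
  "cert_votes c L = {p \<in> set (parents c). rnd p = rnd c - 1 \<and> is_vote p L}"

lemma is_cert_iff_cert_votes:
  "is_cert f w c L \<longleftrightarrow> rnd c = rnd L + w - 1 \<and> 2 * f + 1 \<le> card (author ` cert_votes c L)"
  by (simp add: is_cert_def cert_votes_def)

lemma certs_same_slot_eq:
  assumes "finite V" "card V \<le> 3 * f + 1" "Byz \<subseteq> V" "card Byz \<le> f"
    and authors: "\<forall>b \<in> B. author b \<in> V"
    and honest_unique: "\<forall>b1 \<in> B. \<forall>b2 \<in> B. author b1 = author b2 \<and> author b1 \<notin> Byz
           \<and> rnd b1 = rnd b2 \<longrightarrow> b1 = b2"
    and "set (parents c1) \<subseteq> B" "set (parents c2) \<subseteq> B"
    and cert1: "is_cert f w c1 L1" and cert2: "is_cert f w c2 L2"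
    and "author L1 = author L2" "rnd L1 = rnd L2"
  shows "L1 = L2"
proof -
  have "cert_votes c1 L1 \<subseteq> B" "cert_votes c2 L2 \<subseteq> B"
    using assms(7,8) by (auto simp: cert_votes_def)
  then have "author ` cert_votes c1 L1 \<subseteq> V" "author ` cert_votes c2 L2 \<subseteq> V"
    using authors by auto
  moreover have "2 * f + 1 \<le> card (author ` cert_votes c1 L1)"
    and "2 * f + 1 \<le> card (author ` cert_votes c2 L2)"
    using cert1 cert2 by (simp_all add: is_cert_iff_cert_votes)
  ultimately obtain v where v1: "v \<in> author ` cert_votes c1 L1"
    and v2: "v \<in> author ` cert_votes c2 L2" and "v \<notin> Byz"
    by (rule quorums_share_honest[OF assms(1-4)])
  obtain p1 where "v = author p1" and p1: "p1 \<in> cert_votes c1 L1"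
    using v1 by (rule imageE)
  obtain p2 where "v = author p2" and p2: "p2 \<in> cert_votes c2 L2"
    using v2 by (rule imageE)
  have "p1 \<in> B" "p2 \<in> B"
    using p1 p2 \<open>cert_votes c1 L1 \<subseteq> B\<close> \<open>cert_votes c2 L2 \<subseteq> B\<close> by blast+
  moreover have "rnd p1 = rnd p2"
    using p1 p2 cert1 cert2 \<open>rnd L1 = rnd L2\<close> by (simp add: cert_votes_def is_cert_iff_cert_votes)
  ultimately have "p1 = p2"
    using honest_unique \<open>v \<notin> Byz\<close> \<open>v = author p1\<close> \<open>v = author p2\<close> by blast
  then have "is_vote p1 L1" "is_vote p1 L2"
    using p1 p2 by (simp_all add: cert_votes_def)
  then show ?thesis
    using vote_unique assms(11,12) by blast
qed

theorem lemma5: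
  fixes V Byz :: "'v set" and f w :: nat
    and B :: "('v, 'p) block set" and D :: "'v \<Rightarrow> ('v, 'p) block set"
    and slot :: "nat \<Rightarrow> 'v \<times> nat" and i :: nat and v1 v2 :: 'v
    and L1 L2 :: "('v, 'p) block"
  assumes "finite V" and "card V = 3 * f + 1"
    and "Byz \<subseteq> V" and "card Byz \<le> f"
    and "w \<in> {4, 5}"
    and "\<forall>b \<in> B. author b \<in> V"
    and "\<forall>b1 \<in> B. \<forall>b2 \<in> B. author b1 = author b2 \<and> author b1 \<notin> Byz \<and> rnd b1 = rnd b2
           \<longrightarrow> b1 = b2"
    and "\<forall>v \<in> V - Byz. finite (D v) \<and> D v \<subseteq> B \<and>
           (\<forall>b \<in> D v. valid_block f b \<and> set (parents b) \<subseteq> D v)"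
    and "\<forall>k. fst (slot k) \<in> V"
    and "v1 \<in> V - Byz" and "v2 \<in> V - Byz"
    and "committed f w slot (D v1) i L1"
    and "committed f w slot (D v2) i L2"
  shows "L1 = L2"
proof -
  obtain c1 where "c1 \<in> D v1" "is_cert f w c1 L1"
    and L1: "author L1 = fst (slot i)" "rnd L1 = snd (slot i)"
    using committed_imp_cert[OF assms(12)] by blast
  obtain c2 where "c2 \<in> D v2" "is_cert f w c2 L2"
    and L2: "author L2 = fst (slot i)" "rnd L2 = snd (slot i)"
    using committed_imp_cert[OF assms(13)] by blast
  have "set (parents c1) \<subseteq> B" "set (parents c2) \<subseteq> B"
    using assms(8,10,11) \<open>c1 \<in> D v1\<close> \<open>c2 \<in> D v2\<close> by blast+
  moreover have "card V \<le> 3 * f + 1" "author L1 = author L2" "rnd L1 = rnd L2"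
    using assms(2) L1 L2 by simp_all
  ultimately show ?thesis
    using certs_same_slot_eq[OF assms(1) _ assms(3,4,6,7)]
      \<open>is_cert f w c1 L1\<close> \<open>is_cert f w c2 L2\<close> by blast
qed

end
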